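(* Read's space $\mathcal R=(c_0,|||\cdot|||)$ is not locally uniformly rotund: there exist $x$ with $|||x|||=1$ and a sequence $(x_n)$ with $|||x_n|||=1$ and $|||x+x_n|||\to2$ such that $(x_n)$ does not converge to $x$ in norm.
   Context: Let $c_{00}(\mathbb Q)$ be the set of finitely supported sequences with rational coefficients, and let $(u_n)_{n\in\mathbb N}$ be a sequence in $c_{00}(\mathbb Q)$ which lists every element of $c_{00}(\mathbb Q)$ infinitely many times. Let $(a_n)_{n\in\mathbb N}$ be a strictly increasing sequence of positive integers with $a_n>\max\operatorname{supp} u_n$ and $a_n>\|u_n\|_1$ for every $n$. $(e_n)$ denotes the canonical unit vectors and $\langle x,y\rangle=\sum_n x_ny_n$. Read's norm on $c_0$ is $|||x||| = \|x\|_\infty + \sum_{n} 2^{-a_n^2}|\langle x, u_n - e_{a_n}\rangle|$, and Read's space is $\mathcal R=(c_0,|||\cdot|||)$ (real scalars). A Banach space is locally uniformly rotund if for every $x$ in the unit sphere and every sequence $(x_n)$ in the unit sphere with $\|x+x_n\|\to 2$ one has $\|x_n-x\|\to0$. *)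

theory Defs
  imports "HOL-Analysis.Analysis"
begin

definition c0 :: "(nat \<Rightarrow> real) set" where
  "c0 = {x. x \<longlonglongrightarrow> 0}"

definition supp :: "(nat \<Rightarrow> real) \<Rightarrow> nat set" where
  "supp v = {k. v k \<noteq> 0}"

definition c00Q :: "(nat \<Rightarrow> real) set" where
  "c00Q = {v. finite (supp v) \<and> (\<forall>k. v k \<in> \<rat>)}"

definition l1norm :: "(nat \<Rightarrow> real) \<Rightarrow> real" where
  "l1norm v = (\<Sum>k\<in>supp v. \<bar>v k\<bar>)"

definition supnorm :: "(nat \<Rightarrow> real) \<Rightarrow> real" where
  "supnorm x = (SUP k. \<bar>x k\<bar>)"

definition unitvec :: "nat \<Rightarrow> nat \<Rightarrow> real" where
  "unitvec m = (\<lambda>k. if k = m then 1 else 0)"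

definition pairing :: "(nat \<Rightarrow> real) \<Rightarrow> (nat \<Rightarrow> real) \<Rightarrow> real" where
  "pairing x y = (\<Sum>k\<in>supp y. x k * y k)"

definition read_data :: "(nat \<Rightarrow> nat \<Rightarrow> real) \<Rightarrow> (nat \<Rightarrow> nat) \<Rightarrow> bool" where
  "read_data u a \<longleftrightarrow>
     (\<forall>n. u n \<in> c00Q) \<and>
     (\<forall>v\<in>c00Q. infinite {n. u n = v}) \<and>
     strict_mono a \<and> (\<forall>n. 0 < a n) \<and>
     (\<forall>n. \<forall>k\<in>supp (u n). k < a n) \<and>
     (\<forall>n. l1norm (u n) < real (a n))"

definition read_norm :: "(nat \<Rightarrow> nat \<Rightarrow> real) \<Rightarrow> (nat \<Rightarrow> nat) \<Rightarrow> (nat \<Rightarrow> real) \<Rightarrow> real" where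
  "read_norm u a x = supnorm x +
     (\<Sum>n. (1/2) ^ ((a n)^2) * \<bar>pairing x (\<lambda>k. u n k - unitvec (a n) k)\<bar>)"

end

theory Submission
  imports Defs
begin

text \<open>
  Work with vectors \<open>c e\<^sub>0 + d e\<^sub>m\<close>. The weights \<open>2^(-a\<^sub>n\<^sup>2)\<close> beat the growth of the
  functionals \<open>u\<^sub>n - e\<^bsub>a\<^sub>n\<^esub>\<close>, so the penalty \<open>Q m = \<Sum>\<^sub>n 2^(-a\<^sub>n\<^sup>2) |(u\<^sub>n - e\<^bsub>a\<^sub>n\<^esub>)\<^sub>m|\<close>
  carried by coordinate \<open>m\<close> tends to \<open>0\<close>, and
  \<open>|||c e\<^sub>0 + d e\<^sub>m||| = max |c| |d| + |c| Q 0 + O(|d| Q m)\<close>.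
  With \<open>x = e\<^sub>0/(1 + Q 0)\<close> and \<open>x\<^sub>n\<close> the normalisation of \<open>e\<^sub>0 + e\<^bsub>n+1\<^esub>/2\<close>, the
  coefficient of \<open>e\<^sub>0\<close> in \<open>x\<^sub>n\<close> tends to that of \<open>x\<close>, so \<open>|||x + x\<^sub>n||| \<rightarrow> 2\<close>; but the
  sup norm keeps seeing the far coordinate, so \<open>|||x\<^sub>n - x||| \<rightarrow> 1/(2(1 + Q 0)) > 0\<close>.
\<close>

definition read_vec :: "(nat \<Rightarrow> nat \<Rightarrow> real) \<Rightarrow> (nat \<Rightarrow> nat) \<Rightarrow> nat \<Rightarrow> nat \<Rightarrow> real" where
  "read_vec u a n = (\<lambda>k. u n k - unitvec (a n) k)"

definition read_weight :: "(nat \<Rightarrow> nat) \<Rightarrow> nat \<Rightarrow> real" where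
  "read_weight a n = (1/2) ^ ((a n)\<^sup>2)"

definition read_penalty :: "(nat \<Rightarrow> nat \<Rightarrow> real) \<Rightarrow> (nat \<Rightarrow> nat) \<Rightarrow> (nat \<Rightarrow> real) \<Rightarrow> real" where
  "read_penalty u a x = (\<Sum>n. read_weight a n * \<bar>pairing x (read_vec u a n)\<bar>)"

definition coord_penalty :: "(nat \<Rightarrow> nat \<Rightarrow> real) \<Rightarrow> (nat \<Rightarrow> nat) \<Rightarrow> nat \<Rightarrow> real" where
  "coord_penalty u a k = (\<Sum>n. read_weight a n * \<bar>read_vec u a n k\<bar>)"

definition two_point :: "real \<Rightarrow> real \<Rightarrow> nat \<Rightarrow> nat \<Rightarrow> real" where
  "two_point c d m = (\<lambda>k. c * unitvec 0 k + d * unitvec m k)"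

lemma read_norm_eq_supnorm_plus_penalty:
  "read_norm u a x = supnorm x + read_penalty u a x"
  by (simp add: read_norm_def read_penalty_def read_weight_def read_vec_def)

lemma pairing_two_point:
  assumes "finite (supp v)"
  shows "pairing (two_point c d m) v = c * v 0 + d * v m"
proof -
  have coord: "(\<Sum>k\<in>supp v. unitvec j k * v k) = v j" for j
  proof -
    have "(\<Sum>k\<in>supp v. unitvec j k * v k) = (\<Sum>k\<in>supp v. if j = k then v k else 0)"
      by (intro sum.cong) (auto simp: unitvec_def)
    also have "\<dots> = v j"
      using assms by (simp add: supp_def)
    finally show ?thesis .
  qed
  have "pairing (two_point c d m) v
      = (\<Sum>k\<in>supp v. c * (unitvec 0 k * v k) + d * (unitvec m k * v k))"
    unfolding pairing_def two_point_def by (intro sum.cong) (auto simp: algebra_simps)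
  also have "\<dots> = c * v 0 + d * v m"
    by (simp add: sum.distrib sum_distrib_left[symmetric] coord)
  finally show ?thesis .
qed

lemma supnorm_two_point:
  assumes "m \<noteq> 0"
  shows "supnorm (two_point c d m) = max \<bar>c\<bar> \<bar>d\<bar>"
  unfolding supnorm_def
proof (rule cSup_eq_maximum)
  have coord: "two_point c d m k = (if k = 0 then c else if k = m then d else 0)" for k
    using assms by (simp add: two_point_def unitvec_def)
  show "max \<bar>c\<bar> \<bar>d\<bar> \<in> range (\<lambda>k. \<bar>two_point c d m k\<bar>)"
  proof (cases "\<bar>d\<bar> \<le> \<bar>c\<bar>")
    case True
    then show ?thesis using coord[of 0] by (intro image_eqI[of _ _ 0]) (auto simp: max_def)
  next
    case False
    then show ?thesis using coord[of m] assms by (intro image_eqI[of _ _ m]) (auto simp: max_def)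
  qed
  show "y \<le> max \<bar>c\<bar> \<bar>d\<bar>" if "y \<in> range (\<lambda>k. \<bar>two_point c d m k\<bar>)" for y
    using that by (auto simp: coord)
qed

lemma two_point_in_c0: "two_point c d m \<in> c0"
  unfolding c0_def
proof (simp, rule tendsto_eventually)
  show "\<forall>\<^sub>F k in sequentially. two_point c d m k = 0"
    unfolding eventually_sequentially
    by (rule exI[of _ "Suc m"]) (auto simp: two_point_def unitvec_def)
qed

lemma half_power_square_bound:
  fixes A n m :: nat
  assumes "n \<le> A" "m \<le> A"
  shows "(1/2::real) ^ (A\<^sup>2) * (real A + 1) \<le> 8 * (1/2)^m * (1/2)^n"
proof -
  have lin: "real A + 1 \<le> 2 ^ A"
  proof -
    have "A + 1 \<le> (2::nat) ^ A"
      using less_exp[of A] by linarith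
    then have "real (A + 1) \<le> real ((2::nat) ^ A)"
      by linarith
    then show ?thesis by simp
  qed
  have quad: "3 * A \<le> A\<^sup>2 + 3"
  proof (cases "A \<le> 2")
    case True
    then have "A = 0 \<or> A = 1 \<or> A = 2" by auto
    then show ?thesis by (auto simp: power2_eq_square)
  next
    case False
    then have "3 * A \<le> A * A" using mult_le_mono1[of 3 A A] by simp
    then show ?thesis unfolding power2_eq_square by linarith
  qed
  have "(2::real)^m * 2^n * (real A + 1) \<le> 2^A * 2^A * 2^A"
    using lin assms by (intro mult_mono) (auto intro: power_increasing)
  also have "\<dots> = 2 ^ (A + A + A)"
    by (simp add: power_add)
  also have "\<dots> \<le> 2 ^ (A\<^sup>2 + 3)"
    using quad by (intro power_increasing) auto
  also have "\<dots> = 8 * 2 ^ (A\<^sup>2)"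
    by (simp add: power_add)
  finally have bound: "(2::real)^m * 2^n * (real A + 1) \<le> 8 * 2 ^ (A\<^sup>2)" .
  have "(1/2::real) ^ (A\<^sup>2) * (real A + 1) = (real A + 1) / 2 ^ (A\<^sup>2)"
    by (simp add: power_divide)
  also have "\<dots> \<le> 8 / (2^m * 2^n)"
    using bound by (simp add: divide_simps mult_ac)
  also have "\<dots> = 8 * (1/2)^m * (1/2)^n"
    by (simp add: power_divide)
  finally show ?thesis .
qed

lemma LIMSEQ_of_abs_diff_le:
  fixes f g h :: "nat \<Rightarrow> real"
  assumes "\<And>n. \<bar>f n - g n\<bar> \<le> h n" "h \<longlonglongrightarrow> 0" "g \<longlonglongrightarrow> L"
  shows "f \<longlonglongrightarrow> L"
  using assms(3)
proof (rule Lim_transform)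
  show "(\<lambda>n. f n - g n) \<longlonglongrightarrow> 0"
    using assms(2) by (rule Lim_null_comparison[rotated]) (simp add: assms(1))
qed

locale read_space =
  fixes u :: "nat \<Rightarrow> nat \<Rightarrow> real" and a :: "nat \<Rightarrow> nat"
  assumes read_data: "read_data u a"
begin

lemma finite_supp_read_vec: "finite (supp (read_vec u a n))"
proof -
  have "finite (supp (u n))"
    using read_data by (simp add: read_data_def c00Q_def)
  moreover have "supp (read_vec u a n) \<subseteq> insert (a n) (supp (u n))"
    by (auto simp: supp_def read_vec_def unitvec_def)
  ultimately show ?thesis
    by (meson finite_insert finite_subset)
qed

lemma read_vec_bound: "\<bar>read_vec u a n k\<bar> \<le> real (a n) + 1"
proof -
  have fin: "finite (supp (u n))" and l1: "l1norm (u n) < real (a n)"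
    using read_data by (auto simp: read_data_def c00Q_def)
  have "\<bar>u n k\<bar> \<le> l1norm (u n)"
    using fin unfolding l1norm_def
    by (cases "k \<in> supp (u n)") (auto intro: member_le_sum sum_nonneg simp: supp_def)
  moreover have "\<bar>read_vec u a n k\<bar> \<le> \<bar>u n k\<bar> + \<bar>unitvec (a n) k\<bar>"
    unfolding read_vec_def by (rule abs_triangle_ineq4)
  moreover have "\<bar>unitvec (a n) k\<bar> \<le> 1"
    by (simp add: unitvec_def)
  ultimately show ?thesis
    using l1 by linarith
qed

lemma read_vec_eq_0:
  assumes "a n < k"
  shows "read_vec u a n k = 0"
proof -
  have "\<forall>j\<in>supp (u n). j < a n"
    using read_data by (simp add: read_data_def)
  then have "u n k = 0"
    using assms by (auto simp: supp_def)
  then show ?thesis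
    using assms by (simp add: read_vec_def unitvec_def)
qed

lemma weighted_read_vec_bound:
  "read_weight a n * \<bar>read_vec u a n k\<bar> \<le> 8 * (1/2)^k * (1/2)^n"
proof (cases "a n < k")
  case True
  then show ?thesis by (simp add: read_vec_eq_0)
next
  case False
  have "n \<le> a n"
    using read_data by (simp add: read_data_def seq_suble)
  have "read_weight a n * \<bar>read_vec u a n k\<bar> \<le> read_weight a n * (real (a n) + 1)"
    using read_vec_bound by (intro mult_left_mono) (auto simp: read_weight_def)
  also have "\<dots> \<le> 8 * (1/2)^k * (1/2)^n"
    using half_power_square_bound[of n "a n" k] \<open>n \<le> a n\<close> False
    unfolding read_weight_def by simp
  finally show ?thesis .
qed

lemma summable_weighted_read_vec:
  "summable (\<lambda>n. read_weight a n * \<bar>read_vec u a n k\<bar>)"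
  by (rule summable_comparison_test'[where g = "\<lambda>n. 8 * (1/2)^k * (1/2)^n"])
     (auto intro: summable_mult summable_geometric order_trans[OF _ weighted_read_vec_bound]
           simp: read_weight_def)

lemma coord_penalty_nonneg: "0 \<le> coord_penalty u a k"
  unfolding coord_penalty_def
  by (intro suminf_nonneg summable_weighted_read_vec) (simp add: read_weight_def)

lemma coord_penalty_le: "coord_penalty u a k \<le> 16 * (1/2)^k"
proof -
  have "coord_penalty u a k \<le> (\<Sum>n. 8 * (1/2::real)^k * (1/2)^n)"
    unfolding coord_penalty_def
    by (intro suminf_le weighted_read_vec_bound summable_weighted_read_vec
        summable_mult summable_geometric) auto
  also have "\<dots> = 16 * (1/2)^k"
    by (subst suminf_mult) (auto simp: suminf_geometric)
  finally show ?thesis .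
qed

lemma coord_penalty_tendsto_0: "coord_penalty u a \<longlonglongrightarrow> 0"
proof (rule tendsto_sandwich[where f = "\<lambda>_. 0" and h = "\<lambda>k. 16 * (1/2::real)^k"])
  show "(\<lambda>k. 16 * (1/2::real)^k) \<longlonglongrightarrow> 0"
    by (intro tendsto_mult_right_zero LIMSEQ_power_zero) auto
qed (auto simp: coord_penalty_nonneg coord_penalty_le)

lemma summable_weighted_pairing_two_point:
  "summable (\<lambda>n. read_weight a n * \<bar>c * read_vec u a n 0 + d * read_vec u a n m\<bar>)"
proof (rule summable_comparison_test')
  let ?w = "read_weight a" and ?v = "read_vec u a"
  show "summable (\<lambda>n. \<bar>c\<bar> * (?w n * \<bar>?v n 0\<bar>) + \<bar>d\<bar> * (?w n * \<bar>?v n m\<bar>))"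
    by (intro summable_add summable_mult summable_weighted_read_vec)
  show "norm (?w n * \<bar>c * ?v n 0 + d * ?v n m\<bar>)
          \<le> \<bar>c\<bar> * (?w n * \<bar>?v n 0\<bar>) + \<bar>d\<bar> * (?w n * \<bar>?v n m\<bar>)" for n
  proof -
    have "\<bar>c * ?v n 0 + d * ?v n m\<bar> \<le> \<bar>c\<bar> * \<bar>?v n 0\<bar> + \<bar>d\<bar> * \<bar>?v n m\<bar>"
      using abs_triangle_ineq[of "c * ?v n 0" "d * ?v n m"] by (simp add: abs_mult)
    then have "?w n * \<bar>c * ?v n 0 + d * ?v n m\<bar> \<le> ?w n * (\<bar>c\<bar> * \<bar>?v n 0\<bar> + \<bar>d\<bar> * \<bar>?v n m\<bar>)"
      by (intro mult_left_mono) (auto simp: read_weight_def)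
    then show ?thesis
      by (simp add: read_weight_def algebra_simps)
  qed
qed

lemma read_penalty_two_point_approx:
  "\<bar>read_penalty u a (two_point c d m) - \<bar>c\<bar> * coord_penalty u a 0\<bar>
     \<le> \<bar>d\<bar> * coord_penalty u a m"
proof -
  let ?w = "read_weight a" and ?v = "read_vec u a"
  define f where "f n = ?w n * \<bar>c * ?v n 0 + d * ?v n m\<bar> - \<bar>c\<bar> * (?w n * \<bar>?v n 0\<bar>)" for n
  define g where "g n = \<bar>d\<bar> * (?w n * \<bar>?v n m\<bar>)" for n
  have fg: "\<bar>f n\<bar> \<le> g n" for n
  proof -
    have w: "0 \<le> ?w n"
      by (simp add: read_weight_def)
    have "f n = ?w n * (\<bar>c * ?v n 0 + d * ?v n m\<bar> - \<bar>c * ?v n 0\<bar>)"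
      by (simp add: f_def abs_mult algebra_simps)
    then have "\<bar>f n\<bar> = ?w n * \<bar>\<bar>c * ?v n 0 + d * ?v n m\<bar> - \<bar>c * ?v n 0\<bar>\<bar>"
      by (simp add: abs_mult abs_of_nonneg[OF w])
    also have "\<dots> \<le> ?w n * \<bar>d * ?v n m\<bar>"
      using w by (intro mult_left_mono) linarith+
    finally show ?thesis
      by (simp add: g_def abs_mult mult_ac)
  qed
  have g: "summable g"
    unfolding g_def by (intro summable_mult summable_weighted_read_vec)
  have abs_f: "summable (\<lambda>n. \<bar>f n\<bar>)"
    using fg g by (intro summable_rabs_comparison_test) auto
  have "read_penalty u a (two_point c d m) - \<bar>c\<bar> * coord_penalty u a 0 = suminf f"
    unfolding read_penalty_def coord_penalty_def f_def
    by (simp add: pairing_two_point finite_supp_read_vec suminf_mult[symmetric]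
        suminf_diff summable_weighted_read_vec summable_weighted_pairing_two_point)
  also have "\<bar>suminf f\<bar> \<le> (\<Sum>n. \<bar>f n\<bar>)"
    by (rule summable_rabs[OF abs_f])
  also have "\<dots> \<le> suminf g"
    by (rule suminf_le[OF fg abs_f g])
  also have "\<dots> = \<bar>d\<bar> * coord_penalty u a m"
    unfolding g_def coord_penalty_def by (simp add: suminf_mult summable_weighted_read_vec)
  finally show ?thesis .
qed

lemma read_penalty_two_point_nonneg: "0 \<le> read_penalty u a (two_point c d m)"
  unfolding read_penalty_def pairing_two_point[OF finite_supp_read_vec]
  by (intro suminf_nonneg summable_weighted_pairing_two_point) (simp add: read_weight_def)

lemma read_penalty_two_point_scale:
  assumes "0 \<le> b"
  shows "read_penalty u a (two_point (b * c) (b * d) m) = b * read_penalty u a (two_point c d m)"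
proof -
  have "b * c * read_vec u a n 0 + b * d * read_vec u a n m
      = b * (c * read_vec u a n 0 + d * read_vec u a n m)" for n
    by (simp add: algebra_simps)
  then have "read_penalty u a (two_point (b * c) (b * d) m)
      = (\<Sum>n. b * (read_weight a n * \<bar>c * read_vec u a n 0 + d * read_vec u a n m\<bar>))"
    using assms unfolding read_penalty_def
    by (simp add: pairing_two_point finite_supp_read_vec abs_mult mult.left_commute)
  also have "\<dots> = b * read_penalty u a (two_point c d m)"
    unfolding read_penalty_def
    by (simp add: suminf_mult summable_weighted_pairing_two_point pairing_two_point
        finite_supp_read_vec)
  finally show ?thesis .
qed

lemma read_norm_two_point:
  assumes "m \<noteq> 0"
  shows "read_norm u a (two_point c d m) = max \<bar>c\<bar> \<bar>d\<bar> + read_penalty u a (two_point c d m)"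
  by (simp add: read_norm_eq_supnorm_plus_penalty supnorm_two_point[OF assms])

lemma read_norm_two_point_scale:
  assumes "m \<noteq> 0" "0 \<le> b"
  shows "read_norm u a (two_point (b * c) (b * d) m) = b * read_norm u a (two_point c d m)"
  using assms
  by (simp add: read_norm_two_point read_penalty_two_point_scale abs_mult distrib_left
      max_mult_distrib_left)

lemma read_norm_two_point_normalise:
  fixes c d :: real and m :: nat
  assumes "m \<noteq> 0" "c \<noteq> 0"
  defines "N \<equiv> read_norm u a (two_point c d m)"
  shows "read_norm u a (two_point (c / N) (d / N) m) = 1"
proof -
  have "0 < N"
    using assms read_penalty_two_point_nonneg[of c d m]
    by (simp add: read_norm_two_point add_pos_nonneg max.strict_coboundedI1)
  then show ?thesis
    using read_norm_two_point_scale[OF assms(1), of "1 / N" c d] by (simp add: N_def)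
qed

lemma read_norm_two_point_approx:
  assumes "m \<noteq> 0"
  shows "\<bar>read_norm u a (two_point c d m) - (max \<bar>c\<bar> \<bar>d\<bar> + \<bar>c\<bar> * coord_penalty u a 0)\<bar>
           \<le> \<bar>d\<bar> * coord_penalty u a m"
  using read_penalty_two_point_approx[of c d m] by (simp add: read_norm_two_point[OF assms])

lemma read_norm_two_point_tendsto:
  assumes "c \<longlonglongrightarrow> \<gamma>" "d \<longlonglongrightarrow> \<delta>" "filterlim m at_top sequentially" "\<And>n. m n \<noteq> 0"
  shows "(\<lambda>n. read_norm u a (two_point (c n) (d n) (m n)))
           \<longlonglongrightarrow> max \<bar>\<gamma>\<bar> \<bar>\<delta>\<bar> + \<bar>\<gamma>\<bar> * coord_penalty u a 0"
proof (rule LIMSEQ_of_abs_diff_le)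
  show "\<bar>read_norm u a (two_point (c n) (d n) (m n)) - (max \<bar>c n\<bar> \<bar>d n\<bar> + \<bar>c n\<bar> * coord_penalty u a 0)\<bar>
          \<le> \<bar>d n\<bar> * coord_penalty u a (m n)" for n
    by (rule read_norm_two_point_approx[OF assms(4)])
  have "(\<lambda>n. coord_penalty u a (m n)) \<longlonglongrightarrow> 0"
    by (rule filterlim_compose[OF coord_penalty_tendsto_0 assms(3)])
  then show "(\<lambda>n. \<bar>d n\<bar> * coord_penalty u a (m n)) \<longlonglongrightarrow> 0"
    using assms(2) by (auto intro: tendsto_eq_intros)
  show "(\<lambda>n. max \<bar>c n\<bar> \<bar>d n\<bar> + \<bar>c n\<bar> * coord_penalty u a 0)
          \<longlonglongrightarrow> max \<bar>\<gamma>\<bar> \<bar>\<delta>\<bar> + \<bar>\<gamma>\<bar> * coord_penalty u a 0"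
    using assms(1,2) by (intro tendsto_intros)
qed

end

theorem mainTheorem10:
  fixes u :: "nat \<Rightarrow> nat \<Rightarrow> real" and a :: "nat \<Rightarrow> nat"
  assumes "read_data u a"
  shows "\<exists>x xs. x \<in> c0 \<and> read_norm u a x = 1 \<and>
           (\<forall>n. xs n \<in> c0 \<and> read_norm u a (xs n) = 1) \<and>
           (\<lambda>n. read_norm u a (\<lambda>k. x k + xs n k)) \<longlonglongrightarrow> 2 \<and>
           \<not> ((\<lambda>n. read_norm u a (\<lambda>k. xs n k - x k)) \<longlonglongrightarrow> 0)"
proof -
  interpret read_space u a by unfold_locales (rule assms)
  define P where "P = coord_penalty u a 0"
  define \<alpha> where "\<alpha> = 1 / (1 + P)"
  define N where "N n = read_norm u a (two_point 1 (1/2) (Suc n))" for n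
  define x where "x = two_point \<alpha> 0 1"
  define xs where "xs n = two_point (1 / N n) (1/2 / N n) (Suc n)" for n
  have "0 \<le> P"
    unfolding P_def by (rule coord_penalty_nonneg)
  then have "0 < \<alpha>"
    by (simp add: \<alpha>_def)
  have "read_norm u a (two_point 1 0 1) = 1 + P"
    using read_norm_two_point_approx[of 1 1 0] by (simp add: P_def)
  then have norm_x: "read_norm u a x = 1"
    using read_norm_two_point_normalise[of 1 1 0] by (simp add: x_def \<alpha>_def)
  have norm_xs: "read_norm u a (xs n) = 1" for n
    using read_norm_two_point_normalise[of "Suc n" 1 "1/2"] by (simp add: xs_def N_def)
  have Suc_at_top: "filterlim Suc at_top sequentially"
    by (rule filterlim_Suc)
  have "N \<longlonglongrightarrow> 1 + P"
    unfolding N_def P_def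
    using read_norm_two_point_tendsto[of "\<lambda>_. 1" 1 "\<lambda>_. 1/2" "1/2", OF _ _ Suc_at_top] by simp
  then have inv_N: "(\<lambda>n. 1 / N n) \<longlonglongrightarrow> \<alpha>"
    unfolding \<alpha>_def using \<open>0 \<le> P\<close> by (auto intro!: tendsto_eq_intros)
  have half_inv_N: "(\<lambda>n. 1/2 / N n) \<longlonglongrightarrow> \<alpha> / 2"
    using tendsto_mult[OF tendsto_const inv_N, of "1/2"] by simp
  have "(\<lambda>n. read_norm u a (two_point (\<alpha> + 1 / N n) (1/2 / N n) (Suc n)))
          \<longlonglongrightarrow> max \<bar>\<alpha> + \<alpha>\<bar> \<bar>\<alpha> / 2\<bar> + \<bar>\<alpha> + \<alpha>\<bar> * P"
    unfolding P_def
    by (rule read_norm_two_point_tendsto[OF tendsto_add[OF tendsto_const inv_N] half_inv_N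
          Suc_at_top]) simp
  also have "max \<bar>\<alpha> + \<alpha>\<bar> \<bar>\<alpha> / 2\<bar> + \<bar>\<alpha> + \<alpha>\<bar> * P = 2 * (\<alpha> * (1 + P))"
    using \<open>0 < \<alpha>\<close> by (simp add: algebra_simps)
  also have "\<dots> = 2"
    using \<open>0 \<le> P\<close> by (simp add: \<alpha>_def)
  finally have "(\<lambda>n. read_norm u a (two_point (\<alpha> + 1 / N n) (1/2 / N n) (Suc n))) \<longlonglongrightarrow> 2" .
  moreover have "(\<lambda>n. read_norm u a (two_point (1 / N n - \<alpha>) (1/2 / N n) (Suc n))) \<longlonglongrightarrow> \<alpha> / 2"
    using read_norm_two_point_tendsto[OF tendsto_diff[OF inv_N tendsto_const[of \<alpha>]] half_inv_N
        Suc_at_top]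
      \<open>0 < \<alpha>\<close> by simp
  moreover have "(\<lambda>k. x k + xs n k) = two_point (\<alpha> + 1 / N n) (1/2 / N n) (Suc n)"
       "(\<lambda>k. xs n k - x k) = two_point (1 / N n - \<alpha>) (1/2 / N n) (Suc n)" for n
    by (auto simp: x_def xs_def two_point_def unitvec_def)
  ultimately have "(\<lambda>n. read_norm u a (\<lambda>k. x k + xs n k)) \<longlonglongrightarrow> 2"
    "\<not> (\<lambda>n. read_norm u a (\<lambda>k. xs n k - x k)) \<longlonglongrightarrow> 0"
    using \<open>0 < \<alpha>\<close> LIMSEQ_unique[of _ "\<alpha> / 2" 0] by auto
  moreover have "x \<in> c0" "xs n \<in> c0" for n
    unfolding x_def xs_def by (rule two_point_in_c0)+
  ultimately show ?thesis
    using norm_x norm_xs by (intro exI[of _ x] exI[of _ xs]) simp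
qed

end
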